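(* Let $q$ be a prime power and let $d+1$ be a divisor of $q-1$. A $(d+1)$-divisible Dembowski–Ostrom polynomial $f\in\mathbb{F}_q[x]$ is differentially $d$-uniform if and only if $f$ is almost-$(d+1)$-to-1.
   Context: A polynomial $f\in\mathbb{F}_q[x]$, $q=p^n$, is Dembowski–Ostrom (DO) if it can be written as $\sum_{i,j=0}^{n-1}a_{ij}x^{p^i+p^j}$ when $q$ is odd, and as $\sum_{i\neq j}a_{ij}x^{2^i+2^j}$ when $q$ is even. For a divisor $k$ of $q-1$, $f$ is $k$-divisible if $f(x)=f'(x^k)$ for some map $f'$. $f$ is differentially $d$-uniform if $d=\max_{a\neq 0,\,b}|\{x: f(x+a)-f(x)=b\}|$. $f$ is almost-$k$-to-1 if there is a unique element of $\mathrm{Im}(f)$ with exactly one preimage and every other element of $\mathrm{Im}(f)$ has exactly $k$ preimages. *)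

theory Defs
  imports "HOL-Computational_Algebra.Polynomial"
begin

definition DO_poly :: "nat \<Rightarrow> nat \<Rightarrow> 'a::comm_ring_1 poly \<Rightarrow> bool" where
  "DO_poly p n f \<longleftrightarrow>
     (\<exists>a :: nat \<Rightarrow> nat \<Rightarrow> 'a.
        f = (\<Sum>(i,j)\<in>{(i,j). i < n \<and> j < n \<and> (odd (p ^ n) \<or> i \<noteq> j)}.
               monom (a i j) (p ^ i + p ^ j)))"

definition k_divisible :: "nat \<Rightarrow> 'a::comm_ring_1 poly \<Rightarrow> bool" where
  "k_divisible k f \<longleftrightarrow> (\<exists>g :: 'a \<Rightarrow> 'a. \<forall>x. poly f x = g (x ^ k))"

definition diff_uniform :: "('a::{finite,field} \<Rightarrow> 'a) \<Rightarrow> nat \<Rightarrow> bool" where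
  "diff_uniform F d \<longleftrightarrow>
     d = Max {card {x. F (x + a) - F x = b} | a b. a \<noteq> 0}"

definition almost_k_to_1 :: "('a::finite \<Rightarrow> 'b) \<Rightarrow> nat \<Rightarrow> bool" where
  "almost_k_to_1 F k \<longleftrightarrow>
     (\<exists>!y. y \<in> range F \<and> card (F -` {y}) = 1) \<and>
     (\<forall>y \<in> range F. card (F -` {y}) \<noteq> 1 \<longrightarrow> card (F -` {y}) = k)"

end

theory Submission
  imports Defs "HOL-Number_Theory.Residues" "HOL-Library.FuncSet"
begin

(*
  Let F = poly f and let R be the group of (d+1)-th roots of unity; it has exactly d+1 elements
  because d+1 divides q-1.  Divisibility makes F constant on every orbit R x, and for a \<noteq> 0 the
  points a/(w-1), w \<in> R - {1}, are d distinct zeros of the difference F(x+a) - F(x).  As F is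
  Dembowski-Ostrom, this difference is an additive map plus a constant, so all its nonempty
  fibres have the same size.  Hence F is differentially d-uniform iff each difference has no
  zeros besides these, which says precisely that F(x) = F(y) forces y \<in> R x.  That is, the
  fibres of F are {0} and the orbits of the nonzero elements, each of size d+1: F is
  almost-(d+1)-to-1.  For d = 0 both properties fail.
*)

lemma CHAR_eq_if_card_eq_prime_power:
  assumes "prime p" "card (UNIV :: 'a::{finite,field} set) = p ^ n"
  shows "CHAR('a) = p"
proof -
  have "prime CHAR('a)"
    using prime_CHAR_semidom finite_imp_CHAR_pos[OF finite_UNIV] by blast
  moreover have "CHAR('a) dvd p ^ n"
    using CHAR_dvd_CARD[where 'a='a] assms(2) by simp
  ultimately show ?thesis
    using assms(1) prime_dvd_power primes_dvd_imp_eq by blast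
qed

lemma DO_poly_difference_affine:
  fixes f :: "'a::comm_ring_1 poly"
  assumes "prime p" "CHAR('a) = p" "DO_poly p n f"
  shows "\<exists>L. additive L \<and> (\<forall>x. poly f (x + a) - poly f x = L x + poly f a)"
proof -
  define I where "I = {(i,j). i < n \<and> j < n \<and> (odd (p ^ n) \<or> i \<noteq> j)}"
  obtain c where f: "f = (\<Sum>(i,j)\<in>I. Polynomial.monom (c i j) (p ^ i + p ^ j))"
    using assms(3) unfolding DO_poly_def I_def by blast
  have poly_f: "poly f x = (\<Sum>(i,j)\<in>I. c i j * (x ^ p ^ i * x ^ p ^ j))" for x
    unfolding f by (simp add: poly_sum poly_monom power_add case_prod_unfold)
  have frobenius_add: "(x + y) ^ p ^ i = x ^ p ^ i + y ^ p ^ i" for x y :: 'a and i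
    using freshmans_dream'[of "p ^ i" i x y] assms(1,2) by simp
  define L where
    "L x = (\<Sum>(i,j)\<in>I. c i j * (x ^ p ^ i * a ^ p ^ j + a ^ p ^ i * x ^ p ^ j))" for x
  have "additive L"
    by unfold_locales
      (auto simp: L_def frobenius_add algebra_simps sum.distrib[symmetric] case_prod_unfold
            intro!: sum.cong)
  moreover have "poly f (x + a) - poly f x = L x + poly f a" for x
    unfolding poly_f L_def sum.distrib[symmetric] sum_subtractf[symmetric] case_prod_unfold
    by (intro sum.cong refl) (simp add: frobenius_add algebra_simps)
  ultimately show ?thesis by blast
qed

lemma card_fibre_affine_le:
  fixes G :: "'a::{finite,ab_group_add} \<Rightarrow> 'b::ab_group_add"
  assumes "additive L" "\<And>x. G x = L x + c" "G x0 = u"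
  shows "card {x. G x = v} \<le> card {x. G x = u}"
proof (cases "{x. G x = v} = {}")
  case False
  then obtain y0 where "G y0 = v"
    by blast
  have "bij_betw (\<lambda>z. z - y0 + x0) {x. G x = v} {x. G x = u}"
    by (rule bij_betw_byWitness[where f' = "\<lambda>z. z - x0 + y0"])
      (use \<open>G x0 = u\<close> \<open>G y0 = v\<close> in
        \<open>auto simp: assms(2) additive.add[OF assms(1)] additive.diff[OF assms(1)]\<close>)
  then show ?thesis
    by (simp add: bij_betw_same_card)
qed simp

lemma finite_difference_counts:
  fixes F :: "'a::{finite,ab_group_add} \<Rightarrow> 'b::ab_group_add"
  shows "finite {card {x. F (x + a) - F x = b} | a b. a \<noteq> 0}"
  by (rule finite_subset[of _ "{..card (UNIV :: 'a set)}"]) (auto simp: card_mono)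

lemma diff_uniform_iff_card_difference_zeros:
  fixes F :: "'a::{finite,field} \<Rightarrow> 'a"
  assumes affine: "\<And>a. \<exists>L. additive L \<and> (\<forall>x. F (x + a) - F x = L x + F a)"
    and zeros_ge: "\<And>a. a \<noteq> 0 \<Longrightarrow> m \<le> card {x. F (x + a) - F x = 0}"
    and "m > 0"
  shows "diff_uniform F m \<longleftrightarrow> (\<forall>a. a \<noteq> 0 \<longrightarrow> card {x. F (x + a) - F x = 0} = m)"
proof -
  define S where "S = {card {x. F (x + a) - F x = b} | a b. a \<noteq> 0}"
  have "finite S"
    unfolding S_def by (rule finite_difference_counts)
  have in_S: "card {x. F (x + a) - F x = b} \<in> S" if "a \<noteq> 0" for a b
    unfolding S_def using that by blast
  have S_bounded: "card {x. F (x + a) - F x = b} \<le> card {x. F (x + a) - F x = 0}"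
    if "a \<noteq> 0" for a b
  proof -
    obtain L where L: "additive L" "\<And>x. F (x + a) - F x = L x + F a"
      using affine by blast
    have "card {x. F (x + a) - F x = 0} > 0"
      using zeros_ge[OF that] \<open>m > 0\<close> by linarith
    then obtain x0 where "F (x0 + a) - F x0 = 0"
      by (metis (mono_tags, lifting) card.empty empty_Collect_eq less_irrefl)
    with L show ?thesis
      by (rule card_fibre_affine_le)
  qed
  show ?thesis
  proof
    assume "diff_uniform F m"
    then have "m = Max S"
      unfolding diff_uniform_def S_def .
    show "\<forall>a. a \<noteq> 0 \<longrightarrow> card {x. F (x + a) - F x = 0} = m"
    proof (intro allI impI)
      fix a :: 'a
      assume "a \<noteq> 0"
      then have "card {x. F (x + a) - F x = 0} \<le> m"
        using Max_ge[OF \<open>finite S\<close> in_S[OF \<open>a \<noteq> 0\<close>, of 0]] \<open>m = Max S\<close> by (simp only:)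
      then show "card {x. F (x + a) - F x = 0} = m"
        using zeros_ge[OF \<open>a \<noteq> 0\<close>] by (rule le_antisym)
    qed
  next
    assume zeros_eq: "\<forall>a. a \<noteq> 0 \<longrightarrow> card {x. F (x + a) - F x = 0} = m"
    have "Max S = m"
    proof (rule Max_eqI[OF \<open>finite S\<close>])
      show "m \<in> S"
        using in_S[of 1 0] zeros_eq by simp
    next
      fix s
      assume "s \<in> S"
      then obtain a b where "a \<noteq> 0" "s = card {x. F (x + a) - F x = b}"
        unfolding S_def by blast
      then show "s \<le> m"
        using S_bounded[of a b] zeros_eq by simp
    qed
    then show "diff_uniform F m"
      unfolding diff_uniform_def S_def by simp
  qed
qed

lemma not_diff_uniform_0:
  fixes F :: "'a::{finite,field} \<Rightarrow> 'a"
  shows "\<not> diff_uniform F 0"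
proof
  define S where "S = {card {x. F (x + a) - F x = b} | a b. (a::'a) \<noteq> 0}"
  assume "diff_uniform F 0"
  then have "Max S = 0"
    unfolding diff_uniform_def S_def by simp
  have "finite S"
    unfolding S_def by (rule finite_difference_counts)
  have "card {x. F (x + 1) - F x = F 1 - F 0} \<in> S"
    unfolding S_def by force
  then have "card {x. F (x + 1) - F x = F 1 - F 0} = 0"
    using Max_ge[OF \<open>finite S\<close>] \<open>Max S = 0\<close> le_zero_eq by metis
  moreover have "0 \<in> {x. F (x + 1) - F x = F 1 - F 0}"
    by simp
  ultimately show False
    by (simp add: card_eq_0_iff)
qed

lemma not_almost_1_to_1:
  fixes F :: "'a::finite \<Rightarrow> 'b" and x y :: 'a
  assumes "x \<noteq> y"
  shows "\<not> almost_k_to_1 F 1"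
proof
  assume "almost_k_to_1 F 1"
  then have singleton_fibres: "card (F -` {F z}) = 1" for z :: 'a
    unfolding almost_k_to_1_def by blast
  moreover have "\<exists>!u. u \<in> range F \<and> card (F -` {u}) = 1"
    using \<open>almost_k_to_1 F 1\<close> unfolding almost_k_to_1_def by blast
  ultimately have "F x = F y"
    by (metis rangeI)
  then have "{x, y} \<subseteq> F -` {F x}"
    by auto
  then show False
    using card_mono[of "F -` {F x}" "{x, y}"] singleton_fibres[of x] assms by simp
qed

lemma power_card_minus_1_eq_1:
  fixes x :: "'a::{finite,field}"
  assumes "x \<noteq> 0"
  shows "x ^ (card (UNIV :: 'a set) - 1) = 1"
proof -
  let ?U = "UNIV - {0 :: 'a}"
  have "(\<Prod>y\<in>?U. x * y) = (\<Prod>y\<in>?U. y)"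
    by (rule prod.reindex_bij_witness[of _ "\<lambda>y. y / x" "\<lambda>y. x * y"]) (use assms in auto)
  moreover have "(\<Prod>y\<in>?U. x * y) = x ^ card ?U * (\<Prod>y\<in>?U. y)"
    by (simp add: prod.distrib)
  moreover have "(\<Prod>y\<in>?U. y) \<noteq> 0"
    by simp
  ultimately show ?thesis
    by (simp add: card_Diff_singleton)
qed

lemma card_roots_of_unity_le:
  assumes "k > 0"
  shows "card {w :: 'a::field. w ^ k = 1} \<le> k"
proof -
  let ?P = "Polynomial.monom (1 :: 'a) k - 1"
  have "Polynomial.coeff ?P k = 1"
    using assms by simp
  then have "?P \<noteq> 0"
    by (metis coeff_0 zero_neq_one)
  moreover have "degree ?P \<le> k"
    by (intro degree_diff_le) (simp_all add: degree_monom_le)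
  moreover have "{w. w ^ k = 1} = {w. poly ?P w = 0}"
    by (simp add: poly_monom)
  ultimately show ?thesis
    using card_poly_roots_bound[of ?P] by simp
qed

lemma card_power_fibre_le_card_roots_of_unity:
  fixes y :: "'a::{finite,field}"
  shows "card ((\<lambda>x. x ^ k) -` {y} \<inter> (UNIV - {0})) \<le> card {w :: 'a. w ^ k = 1}"
proof (cases "(\<lambda>x. x ^ k) -` {y} \<inter> (UNIV - {0}) = {}")
  case False
  then obtain x0 where x0: "x0 ^ k = y" "x0 \<noteq> 0"
    by blast
  have "(\<lambda>x. x ^ k) -` {y} \<inter> (UNIV - {0}) \<subseteq> (\<lambda>w. w * x0) ` {w. w ^ k = 1}"
  proof
    fix x
    assume "x \<in> (\<lambda>x. x ^ k) -` {y} \<inter> (UNIV - {0})"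
    then have "(x / x0) ^ k = 1" and "x = x / x0 * x0"
      using x0 by (auto simp: power_divide)
    then show "x \<in> (\<lambda>w. w * x0) ` {w. w ^ k = 1}"
      by blast
  qed
  then have "card ((\<lambda>x. x ^ k) -` {y} \<inter> (UNIV - {0})) \<le> card ((\<lambda>w. w * x0) ` {w. w ^ k = 1})"
    by (rule card_mono[rotated]) simp
  also have "\<dots> \<le> card {w :: 'a. w ^ k = 1}"
    by (rule card_image_le) simp
  finally show ?thesis .
qed simp

(* The k-th power map sends the k m nonzero elements into the at most m solutions of y ^ m = 1,
   so one of its fibres has at least k elements; each fibre lies in a coset of the roots of unity. *)
lemma card_roots_of_unity:
  assumes "k dvd card (UNIV :: 'a::{finite,field} set) - 1" "k > 0"
  shows "card {w :: 'a. w ^ k = 1} = k"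
proof -
  let ?U = "UNIV - {0 :: 'a}"
  obtain m where m: "card (UNIV :: 'a set) - 1 = k * m"
    using assms(1) by (rule dvdE)
  have card_U: "card ?U = k * m"
    using m by (simp add: card_Diff_singleton)
  have "(1 :: 'a) \<in> ?U"
    by simp
  then have "card ?U > 0"
    by (metis card_gt_0_iff empty_iff finite)
  then have "m > 0"
    using card_U by simp
  let ?T = "{y :: 'a. y ^ m = 1}"
  have "(x ^ k) ^ m = 1" if "x \<noteq> 0" for x :: 'a
    using power_card_minus_1_eq_1[OF that] unfolding m power_mult .
  then have "(\<lambda>x. x ^ k) \<in> ?U \<rightarrow> ?T"
    by (intro funcsetI) simp
  moreover have "?T \<noteq> {}"
    by (rule ex_in_conv[THEN iffD1], rule exI[of _ 1]) simp
  ultimately have "\<exists>y\<in>?T. card ((\<lambda>x. x ^ k) -` {y} \<inter> ?U) * card ?T \<ge> card ?U"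
    by (intro pigeonhole_card) auto
  then obtain y where y: "card ((\<lambda>x. x ^ k) -` {y} \<inter> ?U) * card ?T \<ge> card ?U"
    by blast
  have "k * m = card ?U"
    using card_U by simp
  also have "\<dots> \<le> card ((\<lambda>x. x ^ k) -` {y} \<inter> ?U) * card ?T"
    by (rule y)
  also have "\<dots> \<le> card {w :: 'a. w ^ k = 1} * m"
    by (intro mult_le_mono card_power_fibre_le_card_roots_of_unity
        card_roots_of_unity_le \<open>m > 0\<close>)
  finally have "k \<le> card {w :: 'a. w ^ k = 1}"
    using \<open>m > 0\<close> by simp
  then show ?thesis
    using card_roots_of_unity_le[OF assms(2), where 'a='a] by linarith
qed

(* The solutions x of x + a = w * x for the k-th roots of unity w \<noteq> 1. *)
definition shift_points :: "nat \<Rightarrow> 'a::field \<Rightarrow> 'a set" where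
  "shift_points k a = (\<lambda>w. a / (w - 1)) ` ({w. w ^ k = 1} - {1})"

lemma shift_points_subset_difference_zeros:
  fixes F :: "'a::field \<Rightarrow> 'a"
  assumes invariant: "\<And>w x. w ^ k = 1 \<Longrightarrow> F (w * x) = F x"
  shows "shift_points k a \<subseteq> {x. F (x + a) - F x = 0}"
proof
  fix x
  assume "x \<in> shift_points k a"
  then obtain w where w: "w ^ k = 1" "w \<noteq> 1" "x = a / (w - 1)"
    unfolding shift_points_def by blast
  then have "x + a = w * x"
    by (simp add: field_simps)
  then show "x \<in> {x. F (x + a) - F x = 0}"
    using invariant[OF w(1)] by simp
qed

lemma card_shift_points:
  fixes a :: "'a::{finite,field}"
  assumes "a \<noteq> 0"
  shows "card (shift_points k a) = card {w :: 'a. w ^ k = 1} - 1"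
proof -
  have "inj_on (\<lambda>w. a / (w - 1)) ({w. w ^ k = 1} - {1})"
    by (rule inj_onI) (use assms in \<open>auto simp: field_simps\<close>)
  then show ?thesis
    unfolding shift_points_def by (simp add: card_image card_Diff_singleton)
qed

lemma card_difference_zeros_ge:
  fixes F :: "'a::{finite,field} \<Rightarrow> 'a"
  assumes "\<And>w x. w ^ k = 1 \<Longrightarrow> F (w * x) = F x" "a \<noteq> 0"
  shows "card {w :: 'a. w ^ k = 1} - 1 \<le> card {x. F (x + a) - F x = 0}"
  using card_mono[OF finite shift_points_subset_difference_zeros[where k = k and a = a, OF assms(1)]]
  unfolding card_shift_points[OF assms(2)] .

lemma card_difference_zeros_eq_iff_subset:
  fixes F :: "'a::{finite,field} \<Rightarrow> 'a"
  assumes "\<And>w x. w ^ k = 1 \<Longrightarrow> F (w * x) = F x" "a \<noteq> 0"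
  shows "card {x. F (x + a) - F x = 0} = card {w :: 'a. w ^ k = 1} - 1 \<longleftrightarrow>
    {x. F (x + a) - F x = 0} \<subseteq> shift_points k a"
proof -
  have subset: "shift_points k a \<subseteq> {x. F (x + a) - F x = 0}"
    by (rule shift_points_subset_difference_zeros[OF assms(1)])
  have card: "card (shift_points k a) = card {w :: 'a. w ^ k = 1} - 1"
    by (rule card_shift_points[OF assms(2)])
  show ?thesis
  proof
    assume "card {x. F (x + a) - F x = 0} = card {w :: 'a. w ^ k = 1} - 1"
    then have "shift_points k a = {x. F (x + a) - F x = 0}"
      using card_subset_eq[OF finite subset] card by argo
    then show "{x. F (x + a) - F x = 0} \<subseteq> shift_points k a"
      by (rule equalityD2)
  next
    assume "{x. F (x + a) - F x = 0} \<subseteq> shift_points k a"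
    then have "shift_points k a = {x. F (x + a) - F x = 0}"
      using subset by (rule subset_antisym[rotated])
    then show "card {x. F (x + a) - F x = 0} = card {w :: 'a. w ^ k = 1} - 1"
      using card by argo
  qed
qed

lemma fibres_in_orbits_iff_difference_zeros_subset:
  fixes F :: "'a::field \<Rightarrow> 'b::ab_group_add"
  shows "(\<forall>x y. F y = F x \<longrightarrow> (\<exists>w. w ^ k = 1 \<and> y = w * x)) \<longleftrightarrow>
    (\<forall>a. a \<noteq> 0 \<longrightarrow> {x. F (x + a) - F x = 0} \<subseteq> shift_points k a)"
proof (intro iffI allI impI subsetI)
  fix a x
  assume "\<forall>x y. F y = F x \<longrightarrow> (\<exists>w. w ^ k = 1 \<and> y = w * x)"
    and "a \<noteq> 0" and "x \<in> {x. F (x + a) - F x = 0}"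
  then obtain w where w: "w ^ k = 1" "x + a = w * x"
    by auto
  with \<open>a \<noteq> 0\<close> have "w \<noteq> 1"
    by auto
  with w(2) have "x = a / (w - 1)"
    by (simp add: field_simps)
  with w(1) \<open>w \<noteq> 1\<close> show "x \<in> shift_points k a"
    unfolding shift_points_def by blast
next
  fix x y
  assume zeros: "\<forall>a. a \<noteq> 0 \<longrightarrow> {x. F (x + a) - F x = 0} \<subseteq> shift_points k a"
    and "F y = F x"
  show "\<exists>w. w ^ k = 1 \<and> y = w * x"
  proof (cases "y = x")
    case False
    then have "y - x \<noteq> 0"
      by simp
    moreover have "x \<in> {x'. F (x' + (y - x)) - F x' = 0}"
      using \<open>F y = F x\<close> by simp
    ultimately have "x \<in> shift_points k (y - x)"
      using zeros by blast
    then obtain w where "w ^ k = 1" "w \<noteq> 1" "x = (y - x) / (w - 1)"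
      unfolding shift_points_def by blast
    then show ?thesis
      by (auto simp: field_simps)
  qed (auto intro: exI[of _ 1])
qed

lemma fibres_in_orbits_iff_card_difference_zeros:
  fixes F :: "'a::{finite,field} \<Rightarrow> 'a"
  assumes "\<And>w x. w ^ k = 1 \<Longrightarrow> F (w * x) = F x"
  shows "(\<forall>x y. F y = F x \<longrightarrow> (\<exists>w. w ^ k = 1 \<and> y = w * x)) \<longleftrightarrow>
    (\<forall>a. a \<noteq> 0 \<longrightarrow> card {x. F (x + a) - F x = 0} = card {w :: 'a. w ^ k = 1} - 1)"
  unfolding fibres_in_orbits_iff_difference_zeros_subset
  using card_difference_zeros_eq_iff_subset[OF assms] by simp

lemma vimage_eq_orbit:
  fixes F :: "'a::field \<Rightarrow> 'b"
  assumes "\<And>w x. w ^ k = 1 \<Longrightarrow> F (w * x) = F x"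
    and "\<And>x y. F y = F x \<Longrightarrow> \<exists>w. w ^ k = 1 \<and> y = w * x"
  shows "F -` {F x} = (\<lambda>w. w * x) ` {w. w ^ k = 1}"
proof (intro equalityI subsetI)
  fix y
  assume "y \<in> F -` {F x}"
  then obtain w where "w ^ k = 1" "y = w * x"
    using assms(2) by auto
  then show "y \<in> (\<lambda>w. w * x) ` {w. w ^ k = 1}"
    by blast
qed (use assms(1) in auto)

lemma card_image_mult_right:
  fixes x :: "'a::field"
  assumes "x \<noteq> 0"
  shows "card ((\<lambda>w. w * x) ` A) = card A"
  using assms by (subst card_image) (auto intro: inj_onI)

lemma fibres_in_orbits_if_almost_k_to_1:
  fixes F :: "'a::{finite,field} \<Rightarrow> 'b"
  assumes invariant: "\<And>w x. w ^ k = 1 \<Longrightarrow> F (w * x) = F x"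
    and card_roots: "card {w :: 'a. w ^ k = 1} = k" and "k \<ge> 2"
    and almost: "almost_k_to_1 F k"
  shows "F y = F x \<Longrightarrow> \<exists>w. w ^ k = 1 \<and> y = w * x"
proof -
  let ?R = "{w :: 'a. w ^ k = 1}"
  have fibre: "F -` {F x} = (\<lambda>w. w * x) ` ?R" if "x \<noteq> 0" for x
  proof -
    have orbit_subset: "(\<lambda>w. w * x) ` ?R \<subseteq> F -` {F x}"
      using invariant by auto
    then have "card (F -` {F x}) \<ge> k"
      using card_mono[OF finite orbit_subset] card_image_mult_right[OF that] card_roots by simp
    then have "card (F -` {F x}) = k"
      using almost \<open>k \<ge> 2\<close> unfolding almost_k_to_1_def by auto
    then show ?thesis
      using card_subset_eq[OF finite orbit_subset] card_image_mult_right[OF that] card_roots by simp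
  qed
  assume "F y = F x"
  show "\<exists>w. w ^ k = 1 \<and> y = w * x"
  proof (cases "x = 0")
    case True
    have "y = 0"
    proof (rule ccontr)
      assume "y \<noteq> 0"
      then have "x \<in> (\<lambda>w. w * y) ` ?R"
        using fibre[of y] \<open>F y = F x\<close> by auto
      then show False
        using \<open>x = 0\<close> \<open>y \<noteq> 0\<close> \<open>k \<ge> 2\<close> by (auto simp: power_0_left)
    qed
    with True show ?thesis
      by (intro exI[of _ 1]) simp
  next
    case False
    then show ?thesis
      using fibre[of x] \<open>F y = F x\<close> by auto
  qed
qed

lemma almost_k_to_1_if_fibres_in_orbits:
  fixes F :: "'a::{finite,field} \<Rightarrow> 'b"
  assumes invariant: "\<And>w x. w ^ k = 1 \<Longrightarrow> F (w * x) = F x"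
    and card_roots: "card {w :: 'a. w ^ k = 1} = k" and "k \<ge> 2"
    and orbits: "\<And>x y. F y = F x \<Longrightarrow> \<exists>w. w ^ k = 1 \<and> y = w * x"
  shows "almost_k_to_1 F k"
proof -
  let ?R = "{w :: 'a. w ^ k = 1}"
  have fibre: "F -` {F x} = (\<lambda>w. w * x) ` ?R" for x
    using vimage_eq_orbit[OF invariant orbits] .
  have "(\<lambda>w. w * 0) ` ?R = (\<lambda>w. 0) ` ?R"
    by simp
  also have "\<dots> = {0}"
    by (rule image_constant[of 1]) simp
  finally have card_fibre_0: "card (F -` {F 0}) = 1"
    unfolding fibre by simp
  have card_fibre: "card (F -` {F x}) = k" if "x \<noteq> 0" for x
    unfolding fibre card_image_mult_right[OF that] card_roots ..
  show ?thesis
    unfolding almost_k_to_1_def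
  proof (intro conjI ballI impI)
    show "\<exists>!u. u \<in> range F \<and> card (F -` {u}) = 1"
    proof (rule ex1I[of _ "F 0"])
      fix u
      assume "u \<in> range F \<and> card (F -` {u}) = 1"
      then obtain x where "u = F x" "card (F -` {F x}) = 1"
        by blast
      then show "u = F 0"
        using card_fibre[of x] \<open>k \<ge> 2\<close> by (cases "x = 0") auto
    qed (use card_fibre_0 in simp)
  next
    fix u
    assume "u \<in> range F" "card (F -` {u}) \<noteq> 1"
    then obtain x where "u = F x" "x \<noteq> 0"
      using card_fibre_0 by blast
    then show "card (F -` {u}) = k"
      using card_fibre by simp
  qed
qed

theorem theorem3p3:
  fixes f :: "'a::{finite,field} poly" and p n d :: nat
  assumes "prime p" and "card (UNIV :: 'a set) = p ^ n"
    and "(d + 1) dvd (card (UNIV :: 'a set) - 1)"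
    and "DO_poly p n f"
    and "k_divisible (d + 1) f"
  shows "diff_uniform (poly f) d \<longleftrightarrow> almost_k_to_1 (poly f) (d + 1)"
proof -
  have invariant: "poly f (w * x) = poly f x" if "w ^ (d + 1) = 1" for w x
    using assms(5) that unfolding k_divisible_def by (metis mult_1 power_mult_distrib)
  show ?thesis
  proof (cases "d = 0")
    case True
    then show ?thesis
      using not_diff_uniform_0[of "poly f"] not_almost_1_to_1[of "0 :: 'a" 1 "poly f"] by simp
  next
    case False
    have card_roots: "card {w :: 'a. w ^ (d + 1) = 1} = d + 1"
      by (rule card_roots_of_unity[OF assms(3)]) simp
    have affine: "\<exists>L. additive L \<and> (\<forall>x. poly f (x + a) - poly f x = L x + poly f a)" for a
      by (rule DO_poly_difference_affine[OF assms(1)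
            CHAR_eq_if_card_eq_prime_power[OF assms(1,2)] assms(4)])
    have zeros_ge: "d \<le> card {x. poly f (x + a) - poly f x = 0}" if "a \<noteq> 0" for a
      using card_difference_zeros_ge[where k = "d + 1", OF invariant that] card_roots by simp
    have "diff_uniform (poly f) d \<longleftrightarrow>
        (\<forall>a. a \<noteq> 0 \<longrightarrow> card {x. poly f (x + a) - poly f x = 0} = d)"
      using diff_uniform_iff_card_difference_zeros[OF affine zeros_ge] False by blast
    also have "\<dots> \<longleftrightarrow> (\<forall>x y. poly f y = poly f x \<longrightarrow> (\<exists>w. w ^ (d + 1) = 1 \<and> y = w * x))"
      using fibres_in_orbits_iff_card_difference_zeros[where k = "d + 1", OF invariant] card_roots
      by simp
    also have "\<dots> \<longleftrightarrow> almost_k_to_1 (poly f) (d + 1)"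
      using fibres_in_orbits_if_almost_k_to_1[where k = "d + 1", OF invariant card_roots]
        almost_k_to_1_if_fibres_in_orbits[where k = "d + 1", OF invariant card_roots] False
      by auto
    finally show ?thesis .
  qed
qed

end
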